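(* Let $M\in SL_2(\mathbb{Z})$ be hyperbolic and let $r>0$. Then there exist constants $\delta_M>0$ and $0<c_2<c_1$ such that for all $n_1,n_2\in\mathbb{Z}^2$ and every map $T:\mathbb{T}^2\to\mathbb{T}^2$ of the form $T(x)=Mx+\psi(x)\bmod\mathbb{Z}^2$ with $\psi\in\mathcal{B}_r$ and $d(T,M)\le\delta_M$, $$\exp\!\big(-2\pi c_1(|n_1|_M-|n_2|_M)\big)\,\big|I_{n_1,n_2}(T)\big|\le\exp\!\big(-2\pi c_2(\|n_1\|+\|n_2\|)\big),$$ where $I_{n_1,n_2}(T)=\int_{\mathbb{T}^2}\exp\big(2\pi i\,(n_2\cdot T(x)-n_1\cdot x)\big)\,dx$.
   Context: $\mathbb{T}^2=\mathbb{R}^2/\mathbb{Z}^2$ with Lebesgue measure. For $z=(z_1,z_2)\in\mathbb{C}^2$, $\|z\|=|z_1|+|z_2|$; matrices carry the associated operator norm. A matrix $M\in SL_2(\mathbb{Z})$ is hyperbolic if none of its eigenvalues has modulus $1$; $E^+,E^-$ are the eigenlines of $M^T$ for eigenvalues of modulus $\lambda_M>1$ and $\lambda_M^{-1}$; each $y\in\mathbb{R}^2$ is uniquely $y=y^+_M+y^-_M$ with $y^\pm_M\in E^\pm$, and $|y|_M:=\|y^+_M\|-\|y^-_M\|$. For $r>0$, $\mathcal{B}_r$ is the Banach space of $\mathbb{Z}^2$-periodic maps $\psi:\mathbb{R}^2\to\mathbb{R}^2$ extending holomorphically and boundedly to $\mathbb{R}^2+i(-r,r)^2$, with the sup norm there.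 For $T=M+\psi$, $d(T,M)=\sup_{z}\|\psi(z)\|+\sup_z\|D_z\psi\|$, suprema over $z\in\mathbb{R}^2+i(-r,r)^2$. *)

theory Defs
  imports "HOL-Analysis.Analysis"
begin

definition l1r :: "real^2 \<Rightarrow> real" where
  "l1r y = \<bar>y$1\<bar> + \<bar>y$2\<bar>"

definition l1c :: "complex^2 \<Rightarrow> real" where
  "l1c z = cmod (z$1) + cmod (z$2)"

definition opnorm1 :: "(complex^2 \<Rightarrow> complex^2) \<Rightarrow> real" where
  "opnorm1 L = Sup {l1c (L v) | v. l1c v \<le> 1}"

definition ivec :: "int^2 \<Rightarrow> real^2" where
  "ivec n = (\<chi> i. real_of_int (n$i))"

definition cvec :: "real^2 \<Rightarrow> complex^2" where
  "cvec x = (\<chi> i. complex_of_real (x$i))"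

definition SL2Z :: "real^2^2 \<Rightarrow> bool" where
  "SL2Z M \<longleftrightarrow> (\<forall>i j. M$i$j \<in> \<int>) \<and> det M = 1"

definition is_eigenvalue_c :: "real^2^2 \<Rightarrow> complex \<Rightarrow> bool" where
  "is_eigenvalue_c M l \<longleftrightarrow> det (mat l - (\<chi> i j. complex_of_real (M$i$j))) = 0"

definition hyperbolic :: "real^2^2 \<Rightarrow> bool" where
  "hyperbolic M \<longleftrightarrow> (\<forall>l. is_eigenvalue_c M l \<longrightarrow> cmod l \<noteq> 1)"

text \<open>the (real) eigenvalue of M^T of modulus > 1; its modulus is lambda_M\<close>
definition lamM :: "real^2^2 \<Rightarrow> real" where
  "lamM M = (THE l. \<bar>l\<bar> > 1 \<and> (\<exists>v. v \<noteq> 0 \<and> transpose M *v v = l *\<^sub>R v))"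

definition Eplus :: "real^2^2 \<Rightarrow> (real^2) set" where
  "Eplus M = {v. transpose M *v v = lamM M *\<^sub>R v}"

definition Eminus :: "real^2^2 \<Rightarrow> (real^2) set" where
  "Eminus M = {v. transpose M *v v = inverse (lamM M) *\<^sub>R v}"

definition plus_part :: "real^2^2 \<Rightarrow> real^2 \<Rightarrow> real^2" where
  "plus_part M y = (THE u. u \<in> Eplus M \<and> y - u \<in> Eminus M)"

definition minus_part :: "real^2^2 \<Rightarrow> real^2 \<Rightarrow> real^2" where
  "minus_part M y = y - plus_part M y"

definition normM :: "real^2^2 \<Rightarrow> real^2 \<Rightarrow> real" where
  "normM M y = l1r (plus_part M y) - l1r (minus_part M y)"

definition strip :: "real \<Rightarrow> (complex^2) set" where
  "strip r = {z. \<forall>i. \<bar>Im (z$i)\<bar> < r}"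

definition holo2 :: "(complex^2 \<Rightarrow> complex^2) \<Rightarrow> (complex^2) set \<Rightarrow> bool" where
  "holo2 F S \<longleftrightarrow> (\<forall>z\<in>S. \<exists>D. (F has_derivative D) (at z) \<and> (\<forall>c v. D (c *s v) = c *s D v))"

definition in_Br :: "real \<Rightarrow> (real^2 \<Rightarrow> real^2) \<Rightarrow> (complex^2 \<Rightarrow> complex^2) \<Rightarrow> bool" where
  "in_Br r \<psi> \<Psi> \<longleftrightarrow>
     (\<forall>x k. \<psi> (x + ivec k) = \<psi> x) \<and>
     (\<forall>x. \<Psi> (cvec x) = cvec (\<psi> x)) \<and>
     holo2 \<Psi> (strip r) \<and> bounded (\<Psi> ` strip r)"

definition dTM :: "real \<Rightarrow> (complex^2 \<Rightarrow> complex^2) \<Rightarrow> ereal" where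
  "dTM r \<Psi> = (SUP z\<in>strip r. ereal (l1c (\<Psi> z))) +
               (SUP z\<in>strip r. ereal (opnorm1 (frechet_derivative \<Psi> (at z))))"

definition Icoef :: "real^2^2 \<Rightarrow> (real^2 \<Rightarrow> real^2) \<Rightarrow> int^2 \<Rightarrow> int^2 \<Rightarrow> complex" where
  "Icoef M \<psi> n1 n2 = integral (cbox (0::real^2) 1)
     (\<lambda>x. cis (2 * pi * (ivec n2 \<bullet> (M *v x + \<psi> x) - ivec n1 \<bullet> x)))"

end

theory Submission
  imports Defs "HOL-Complex_Analysis.Complex_Analysis"
begin

text \<open>
  Write \<open>n1 = M\<^sup>T n2 - m\<close>. The integrand of \<open>I(n1, n2)\<close> is \<open>e(m\<cdot>x + n2\<cdot>\<psi>(x))\<close>, which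
  extends holomorphically and \<open>\<int>\<^sup>2\<close>-periodically to the strip; shifting the torus to
  \<open>Im x\<^sub>j = (r/2) sgn m\<^sub>j\<close> gives \<open>|I| \<le> exp(-\<pi> r |m| + 2\<pi> \<delta> |n2|)\<close>. On the other hand,
  \<open>M\<^sup>T\<close> stretches the unstable component of \<open>n2\<close> by \<open>\<lambda>\<^sub>M\<close> and contracts the stable one,
  so \<open>|n1|\<^sub>M - |n2|\<^sub>M \<ge> \<kappa> |n2| - K |m|\<close>. Taking \<open>c1\<close> small compared with \<open>r/K\<close>, and \<open>\<delta>\<close>
  and \<open>c2\<close> small compared with \<open>c1 \<kappa>\<close>, the two estimates combine, since
  \<open>|n1| \<le> \<parallel>M\<parallel> |n2| + |m|\<close>.
\<close>

no_notation fps_nth (infixl "$" 75)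
hide_const (open) Polynomial.content

definition hstrip :: "real \<Rightarrow> complex set" where
  "hstrip r = {z. \<bar>Im z\<bar> < r}"

lemma hstrip_eq_Int: "hstrip r = {z. Im z < r} \<inter> {z. Im z > -r}"
  by (auto simp: hstrip_def)

lemma convex_hstrip: "convex (hstrip r)"
  by (simp add: hstrip_eq_Int convex_halfspace_Im_lt convex_halfspace_Im_gt convex_Int)

lemma open_hstrip: "open (hstrip r)"
  by (simp add: hstrip_eq_Int open_halfspace_Im_lt open_halfspace_Im_gt open_Int)

lemma connected_hstrip: "connected (hstrip r)"
  by (rule convex_connected[OF convex_hstrip])

lemma vector_in_strip_iff: "vector [z1, z2] \<in> strip r \<longleftrightarrow> z1 \<in> hstrip r \<and> z2 \<in> hstrip r"
  by (simp add: strip_def hstrip_def forall_2)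

lemma cvec_vector [simp]: "cvec (vector [a, b]) = vector [of_real a, of_real b]"
  by (simp add: cvec_def vec_eq_iff forall_2)

lemma ivec_vector [simp]: "ivec (vector [a, b]) = vector [of_int a, of_int b]"
  by (simp add: ivec_def vec_eq_iff forall_2)

lemma cvec_add: "cvec (x + y) = cvec x + cvec y"
  by (simp add: cvec_def vec_eq_iff)

lemma vector2_add: "vector [a, b] + vector [c, d] = (vector [a + c, b + d] :: 'a::monoid_add^2)"
  by (simp add: vec_eq_iff forall_2)

lemma contour_integral_linepath_unit:
  "contour_integral (linepath a (a + 1)) h = integral {0..1} (\<lambda>x. h (of_real x + a))"
  by (simp add: contour_integral_integral linepath_def algebra_simps scaleR_conv_of_real)

lemma contour_integral_linepath_translate:
  assumes "\<And>z. z \<in> closed_segment u v \<Longrightarrow> h (z + 1) = h z"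
  shows "contour_integral (linepath (u + 1) (v + 1)) h = contour_integral (linepath u v) h"
proof -
  have "linepath (u + 1) (v + 1) x = linepath u v x + 1" for x
    by (simp add: linepath_def algebra_simps)
  moreover have "h (linepath u v x + 1) = h (linepath u v x)" if "x \<in> {0..1}" for x
    using assms linepath_in_path[OF that] by blast
  ultimately have "integral {0..1} (\<lambda>x. h (linepath (u + 1) (v + 1) x) * (v + 1 - (u + 1))) =
      integral {0..1} (\<lambda>x. h (linepath u v x) * (v - u))"
    by (intro integral_cong) simp
  then show ?thesis
    by (simp add: contour_integral_integral)
qed

text \<open>Cauchy's theorem on the rectangle with corners \<open>0, 1, 1 + i s, i s\<close>: the vertical sides
  cancel by periodicity.\<close>
lemma integral_periodic_holomorphic_shift:
  fixes h :: "complex \<Rightarrow> complex"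
  assumes hol: "h holomorphic_on hstrip r"
    and per: "\<And>z. z \<in> hstrip r \<Longrightarrow> h (z + 1) = h z" and s: "\<bar>s\<bar> < r"
  shows "integral {0..1} (\<lambda>x. h (of_real x)) = integral {0..1} (\<lambda>x. h (of_real x + \<i> * of_real s))"
proof -
  define a where "a = \<i> * of_real s"
  have inS: "0 \<in> hstrip r" "1 \<in> hstrip r" "a \<in> hstrip r" "1 + a \<in> hstrip r"
    using s by (auto simp: hstrip_def a_def)
  have seg: "closed_segment u v \<subseteq> hstrip r" if "u \<in> hstrip r" "v \<in> hstrip r" for u v
    using closed_segment_subset[OF that convex_hstrip] .
  have ci: "h contour_integrable_on linepath u v" if "u \<in> hstrip r" "v \<in> hstrip r" for u v
    using seg[OF that] by (intro contour_integrable_holomorphic_simple[OF hol open_hstrip]) auto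
  define g where "g = linepath 0 1 +++ linepath 1 (1 + a) +++ linepath (1 + a) a +++ linepath a 0"
  have "(h has_contour_integral 0) g"
    using seg inS
    by (intro Cauchy_theorem_convex_simple[OF hol convex_hstrip]) (auto simp: g_def path_image_join)
  then have "contour_integral g h = 0"
    by (rule contour_integral_unique)
  moreover have "contour_integral g h = contour_integral (linepath 0 1) h
      + contour_integral (linepath 1 (1 + a)) h + contour_integral (linepath (1 + a) a) h
      + contour_integral (linepath a 0) h"
    unfolding g_def using inS ci by (simp add: valid_path_join contour_integrable_joinI)
  moreover have "contour_integral (linepath 1 (1 + a)) h = contour_integral (linepath 0 a) h"
    using contour_integral_linepath_translate[of 0 a h] seg[OF inS(1,3)] per by (auto simp: add.commute)
  moreover have "contour_integral (linepath (1 + a) a) h = - contour_integral (linepath a (a + 1)) h"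
    "contour_integral (linepath a 0) h = - contour_integral (linepath 0 a) h"
    by (metis add.commute contour_integral_reversepath reversepath_linepath valid_path_linepath)+
  ultimately show ?thesis
    using contour_integral_linepath_unit[of 0 h] contour_integral_linepath_unit[of a h]
    by (simp add: a_def)
qed

lemma holo2_holomorphic_on_line:
  fixes \<Psi> :: "complex^2 \<Rightarrow> complex^2"
  assumes H: "holo2 \<Psi> S" and T: "\<And>z. z \<in> T \<Longrightarrow> a + z *s v \<in> S"
  shows "(\<lambda>z. \<Psi> (a + z *s v) $ j) holomorphic_on T"
  unfolding holomorphic_on_def
proof
  fix z assume z: "z \<in> T"
  obtain D where D: "(\<Psi> has_derivative D) (at (a + z *s v))" and Dl: "\<And>c w. D (c *s w) = c *s D w"
    using H T[OF z] unfolding holo2_def by blast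
  have "bounded_linear (\<lambda>h::complex. h *s v)"
    unfolding linear_conv_bounded_linear[symmetric]
    by (rule linearI) (auto simp: vec_eq_iff algebra_simps)
  then have "((\<lambda>h. a + h *s v) has_derivative (\<lambda>h. h *s v)) (at z)"
    using has_derivative_add_const[OF bounded_linear_imp_has_derivative, of _ a "at z"]
    by (simp add: add.commute)
  from has_derivative_compose[OF this D]
  have "((\<lambda>h. \<Psi> (a + h *s v) $ j) has_derivative (\<lambda>h. D (h *s v) $ j)) (at z)"
    by (intro bounded_linear.has_derivative[OF bounded_linear_vec_nth]) (simp add: o_def)
  moreover have "(\<lambda>h. D (h *s v) $ j) = (*) (D v $ j)"
    by (auto simp: Dl mult.commute)
  ultimately have "((\<lambda>h. \<Psi> (a + h *s v) $ j) has_field_derivative (D v $ j)) (at z)"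
    unfolding has_field_derivative_def by simp
  then show "(\<lambda>h. \<Psi> (a + h *s v) $ j) field_differentiable at z within T"
    unfolding field_differentiable_def by (blast intro: has_field_derivative_at_within)
qed

definition separately_holomorphic :: "(complex^2 \<Rightarrow> complex) \<Rightarrow> real \<Rightarrow> bool" where
  "separately_holomorphic F r \<longleftrightarrow> (\<forall>c\<in>hstrip r.
     (\<lambda>z. F (vector [z, c])) holomorphic_on hstrip r \<and> (\<lambda>z. F (vector [c, z])) holomorphic_on hstrip r)"

lemma holo2_imp_separately_holomorphic:
  assumes "holo2 \<Psi> (strip r)"
  shows "separately_holomorphic (\<lambda>z. \<Psi> z $ j) r"
  unfolding separately_holomorphic_def
proof
  fix c assume c: "c \<in> hstrip r"
  have "vector [0, c] + z *s (vector [1, 0] :: complex^2) = vector [z, c]"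
    "vector [c, 0] + z *s (vector [0, 1] :: complex^2) = vector [c, z]" for z
    by (simp_all add: vec_eq_iff forall_2)
  moreover have "(\<lambda>z. \<Psi> (vector [0, c] + z *s vector [1, 0]) $ j) holomorphic_on hstrip r"
    "(\<lambda>z. \<Psi> (vector [c, 0] + z *s vector [0, 1]) $ j) holomorphic_on hstrip r"
    by (rule holo2_holomorphic_on_line[OF assms]; use c in \<open>simp add: strip_def hstrip_def forall_2\<close>)+
  ultimately show "(\<lambda>z. \<Psi> (vector [z, c]) $ j) holomorphic_on hstrip r \<and>
      (\<lambda>z. \<Psi> (vector [c, z]) $ j) holomorphic_on hstrip r"
    by simp
qed

lemma separately_holomorphic_translate:
  assumes F: "separately_holomorphic F r"
  shows "separately_holomorphic (\<lambda>z. F (z + cvec x)) r"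
  unfolding separately_holomorphic_def
proof
  fix c assume c: "c \<in> hstrip r"
  have shift: "(\<lambda>z. z + of_real t) ` hstrip r \<subseteq> hstrip r" for t
    by (auto simp: hstrip_def)
  have "c + of_real t \<in> hstrip r" for t
    using c by (simp add: hstrip_def)
  then have H1: "(\<lambda>z. F (vector [z, c + of_real (x$2)])) holomorphic_on hstrip r"
    and H2: "(\<lambda>z. F (vector [c + of_real (x$1), z])) holomorphic_on hstrip r"
    using F unfolding separately_holomorphic_def by blast+
  have "(\<lambda>z. F (vector [z, c + of_real (x$2)])) \<circ> (\<lambda>z. z + of_real (x$1)) holomorphic_on hstrip r"
    "(\<lambda>z. F (vector [c + of_real (x$1), z])) \<circ> (\<lambda>z. z + of_real (x$2)) holomorphic_on hstrip r"
    by (rule holomorphic_on_compose_gen[OF _ H1 shift] holomorphic_on_compose_gen[OF _ H2 shift];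
        intro holomorphic_intros)+
  moreover have "vector [z, c] + cvec x = vector [z + of_real (x$1), c + of_real (x$2)]"
    "vector [c, z] + cvec x = vector [c + of_real (x$1), z + of_real (x$2)]" for z
    by (simp_all add: cvec_def vec_eq_iff forall_2)
  ultimately show "(\<lambda>z. F (vector [z, c] + cvec x)) holomorphic_on hstrip r \<and>
      (\<lambda>z. F (vector [c, z] + cvec x)) holomorphic_on hstrip r"
    by (simp add: o_def)
qed

lemma separately_holomorphic_diff:
  "separately_holomorphic F r \<Longrightarrow> separately_holomorphic G r \<Longrightarrow>
    separately_holomorphic (\<lambda>z. F z - G z) r"
  by (auto simp: separately_holomorphic_def intro!: holomorphic_intros)

lemma holomorphic_on_hstrip_vanishing:
  fixes F :: "complex \<Rightarrow> complex"
  assumes "F holomorphic_on hstrip r" "\<And>x::real. F (of_real x) = 0" "z \<in> hstrip r"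
  shows "F z = 0"
proof (rule analytic_continuation[OF assms(1) open_hstrip connected_hstrip, of "\<real>" 0])
  show "\<real> \<subseteq> hstrip r" "0 \<in> hstrip r"
    using assms(3) by (auto simp: hstrip_def elim!: Reals_cases)
  show "(0::complex) islimpt \<real>"
    unfolding islimpt_approachable
  proof (intro allI impI)
    fix e :: real assume "e > 0"
    then show "\<exists>x'\<in>\<real>. x' \<noteq> 0 \<and> dist x' (0::complex) < e"
      by (intro bexI[where x="complex_of_real (e/2)"]) (auto simp: dist_norm norm_of_real)
  qed
qed (use assms in \<open>auto elim!: Reals_cases\<close>)

lemma separately_holomorphic_vanishing:
  assumes F: "separately_holomorphic F r" and real: "\<And>x. F (cvec x) = 0" and z: "z \<in> strip r"
  shows "F z = 0"
proof -
  define z1 z2 where "z1 = z $ 1" and "z2 = z $ 2"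
  have zv: "z = vector [z1, z2]"
    by (simp add: z1_def z2_def vec_eq_iff forall_2)
  have z12: "z1 \<in> hstrip r" "z2 \<in> hstrip r"
    using z by (simp_all add: zv vector_in_strip_iff)
  have hol1: "(\<lambda>w. F (vector [w, c])) holomorphic_on hstrip r"
    and hol2: "(\<lambda>w. F (vector [c, w])) holomorphic_on hstrip r" if "c \<in> hstrip r" for c
    using F that unfolding separately_holomorphic_def by blast+
  have real_second: "F (vector [w, of_real y]) = 0" if "w \<in> hstrip r" for w y
  proof (rule holomorphic_on_hstrip_vanishing[OF hol1 _ that])
    show "of_real y \<in> hstrip r"
      using z12 by (simp add: hstrip_def)
    show "F (vector [of_real x, of_real y]) = 0" for x
      using real[of "vector [x, y]"] by simp
  qed
  have "F (vector [z1, w]) = 0" if "w \<in> hstrip r" for w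
    by (rule holomorphic_on_hstrip_vanishing[OF hol2[OF z12(1)] real_second[OF z12(1)] that])
  then show ?thesis
    using z12(2) zv by simp
qed

lemma in_Br_extension_periodic:
  assumes B: "in_Br r \<psi> \<Psi>" and z: "z \<in> strip r"
  shows "\<Psi> (z + cvec (ivec k)) = \<Psi> z"
proof -
  have per: "\<And>x. \<psi> (x + ivec k) = \<psi> x" and ext: "\<And>x. \<Psi> (cvec x) = cvec (\<psi> x)"
    and H: "holo2 \<Psi> (strip r)" using B unfolding in_Br_def by auto
  have "\<Psi> (z + cvec (ivec k)) $ j - \<Psi> z $ j = 0" for j
  proof (rule separately_holomorphic_vanishing[OF _ _ z])
    show "separately_holomorphic (\<lambda>z. \<Psi> (z + cvec (ivec k)) $ j - \<Psi> z $ j) r"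
      using holo2_imp_separately_holomorphic[OF H]
      by (intro separately_holomorphic_diff separately_holomorphic_translate)
    show "\<Psi> (cvec x + cvec (ivec k)) $ j - \<Psi> (cvec x) $ j = 0" for x
      by (simp only: cvec_add[symmetric] ext per) simp
  qed
  then show ?thesis
    by (simp add: vec_eq_iff)
qed

definition vec2_of_pair :: "real \<times> real \<Rightarrow> real^2" where
  "vec2_of_pair p = vector [fst p, snd p]"

lemma linear_vec2_of_pair: "linear vec2_of_pair"
  by (rule linearI) (auto simp: vec2_of_pair_def vec_eq_iff forall_2)

lemma vec2_of_pair_image_cbox:
  "vec2_of_pair ` cbox (u1, u2) (v1, v2) = cbox (vector [u1, u2]) (vector [v1, v2])"
proof -
  have "vec2_of_pair ` A = {x :: real^2. (x$1, x$2) \<in> A}" for A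
  proof (intro equalityI subsetI)
    fix x :: "real^2" assume "x \<in> {x. (x$1, x$2) \<in> A}"
    moreover have "x = vec2_of_pair (x$1, x$2)"
      by (simp add: vec2_of_pair_def vec_eq_iff forall_2)
    ultimately show "x \<in> vec2_of_pair ` A"
      by (metis imageI mem_Collect_eq)
  qed (auto simp: vec2_of_pair_def)
  then show ?thesis
    by (auto simp: mem_box_cart forall_2 cbox_Pair_eq)
qed

lemma content_vec2_of_pair_image: "content (vec2_of_pair ` cbox u v) = content (cbox u v)"
proof -
  obtain u1 u2 v1 v2 where uv: "u = (u1, u2)" "v = (v1, v2)"
    by (cases u, cases v) auto
  have "cbox (vector [u1, u2]) (vector [v1, v2] :: real^2) = {} \<longleftrightarrow> \<not> (u1 \<le> v1 \<and> u2 \<le> v2)"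
    using interval_ne_empty_cart(1)[of "vector [u1, u2] :: real^2" "vector [v1, v2]"]
    by (simp add: forall_2) blast
  then have "content (vec2_of_pair ` cbox u v) = (if u1 \<le> v1 \<and> u2 \<le> v2 then (v1 - u1) * (v2 - u2) else 0)"
    unfolding uv vec2_of_pair_image_cbox content_cbox_if_cart by (simp add: UNIV_2)
  moreover have "content (cbox u v) = (if u1 \<le> v1 then v1 - u1 else 0) * (if u2 \<le> v2 then v2 - u2 else 0)"
    unfolding uv content_Pair cbox_interval[symmetric] by simp
  ultimately show ?thesis
    by auto
qed

lemma integral_unit_square_vec2_eq_prod:
  fixes G :: "real^2 \<Rightarrow> 'c::banach"
  assumes "G integrable_on cbox 0 1"
  shows "integral (cbox 0 1) G = integral (cbox (0, 0) (1, 1)) (G \<circ> vec2_of_pair)"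
proof -
  define h :: "real^2 \<Rightarrow> real \<times> real" where "h x = (x$1, x$2)" for x
  have hg: "h (vec2_of_pair p) = p" and gh: "vec2_of_pair (h x) = x" for p x
    by (simp_all add: vec2_of_pair_def h_def vec_eq_iff forall_2)
  then have h_image: "h ` B = {x. vec2_of_pair x \<in> B}" for B
    by (auto simp: image_iff) metis
  have h_cbox: "h ` cbox u v = cbox (h u) (h v)" for u v
    unfolding h_image by (auto simp: h_def vec2_of_pair_def mem_box_cart forall_2 cbox_Pair_eq)
  have "(G \<circ> vec2_of_pair has_integral (1 / 1) *\<^sub>R integral (cbox 0 1) G) (h ` cbox 0 1)"
    unfolding o_def
  proof (rule has_integral_twiddle[OF _ hg gh])
    show "continuous (at x) vec2_of_pair" for x
      using linear_vec2_of_pair by (simp add: linear_continuous_at linear_conv_bounded_linear)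
    show "\<exists>w z. vec2_of_pair ` cbox u v = cbox w z" for u v
      using vec2_of_pair_image_cbox by (metis prod.collapse)
    show "\<exists>w z. h ` cbox u v = cbox w z" for u v
      using h_cbox by blast
  qed (use content_vec2_of_pair_image assms in \<open>auto simp: has_integral_integral\<close>)
  moreover have "h ` cbox 0 1 = cbox (0, 0) (1, 1)"
    unfolding h_cbox by (simp add: h_def)
  ultimately show ?thesis
    by (simp add: integral_unique)
qed

lemma integral_unit_square_vec2_iterated:
  fixes G :: "real^2 \<Rightarrow> 'c::banach"
  assumes cont: "continuous_on (cbox 0 1) G"
  shows "integral (cbox 0 1) G = integral {0..1} (\<lambda>a. integral {0..1} (\<lambda>b. G (vector [a, b])))"
proof -
  have "vector [0, 0] = (0::real^2)" "vector [1, 1] = (1::real^2)"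
    by (simp_all add: vec_eq_iff forall_2)
  then have "vec2_of_pair ` cbox (0, 0) (1, 1) = cbox 0 1"
    unfolding vec2_of_pair_image_cbox by simp
  moreover have "continuous_on (cbox (0, 0) (1, 1)) vec2_of_pair"
    using linear_vec2_of_pair by (simp add: linear_continuous_on linear_conv_bounded_linear)
  ultimately have "continuous_on (cbox (0, 0) (1, 1)) (G \<circ> vec2_of_pair)"
    using cont by (metis continuous_on_compose)
  from integral_prod_continuous[OF this] show ?thesis
    using integral_unit_square_vec2_eq_prod[OF integrable_continuous[OF cont]]
    by (simp add: vec2_of_pair_def cbox_interval)
qed

lemma continuous_on_vector2 [continuous_intros]:
  fixes f g :: "'b::topological_space \<Rightarrow> 'a::real_normed_vector"
  assumes "continuous_on S f" "continuous_on S g"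
  shows "continuous_on S (\<lambda>x. vector [f x, g x] :: 'a^2)"
proof -
  have eq: "(\<lambda>x. vector [f x, g x] :: 'a^2) = (\<lambda>x. \<chi> i. if i = 1 then f x else g x)"
    by (simp add: fun_eq_iff vec_eq_iff forall_2)
  have "continuous_on S (\<lambda>x. if i = 1 then f x else g x)" for i :: 2
    using assms by (cases "i = 1") auto
  then show ?thesis unfolding eq by (auto intro!: continuous_intros)
qed

text \<open>The shift is done one variable at a time, with Fubini in between.\<close>
lemma integral_torus_shift_Im:
  fixes f :: "complex^2 \<Rightarrow> complex"
  assumes cont: "continuous_on (strip r) f" and hol: "separately_holomorphic f r"
    and per: "\<And>z k. z \<in> strip r \<Longrightarrow> f (z + cvec (ivec k)) = f z"
    and w1: "\<bar>w1\<bar> < r" and w2: "\<bar>w2\<bar> < r"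
  shows "integral (cbox 0 1) (\<lambda>x. f (cvec x)) =
    integral {0..1} (\<lambda>b. integral {0..1} (\<lambda>a. f (vector [of_real a + \<i> * of_real w1, of_real b + \<i> * of_real w2])))"
proof -
  have r0: "r > 0" using w1 by linarith
  have hol1: "(\<lambda>z. f (vector [z, c])) holomorphic_on hstrip r"
    and hol2: "(\<lambda>z. f (vector [c, z])) holomorphic_on hstrip r" if "c \<in> hstrip r" for c
    using hol that unfolding separately_holomorphic_def by blast+
  have per1: "f (vector [z1 + 1, z2]) = f (vector [z1, z2])"
    and per2: "f (vector [z1, z2 + 1]) = f (vector [z1, z2])"
    if "z1 \<in> hstrip r" "z2 \<in> hstrip r" for z1 z2
    using per[of "vector [z1, z2]" "vector [1, 0]"] per[of "vector [z1, z2]" "vector [0, 1]"] that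
    by (simp_all add: vector_in_strip_iff vector2_add)
  have cont_lines: "continuous_on A (\<lambda>p::real \<times> real.
      f (vector [of_real (fst p) + \<i> * of_real c1, of_real (snd p) + \<i> * of_real c2]))"
    if "\<bar>c1\<bar> < r" "\<bar>c2\<bar> < r" for A c1 c2
    by (rule continuous_on_compose2[OF cont])
       (use that in \<open>auto intro!: continuous_intros simp: vector_in_strip_iff hstrip_def\<close>)
  have cont_real: "continuous_on (cbox 0 1) (\<lambda>x. f (cvec x))"
    by (rule continuous_on_compose2[OF cont])
       (use r0 in \<open>auto simp: cvec_def strip_def intro!: continuous_intros\<close>)
  have "integral (cbox 0 1) (\<lambda>x. f (cvec x)) =
      integral {0..1} (\<lambda>a. integral {0..1} (\<lambda>b. f (vector [of_real a, of_real b])))"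
    using integral_unit_square_vec2_iterated[OF cont_real] by simp
  also have "\<dots> = integral {0..1} (\<lambda>a. integral {0..1} (\<lambda>b. f (vector [of_real a, of_real b + \<i> * of_real w2])))"
    using r0 by (intro integral_cong integral_periodic_holomorphic_shift[OF hol2 per2 w2])
      (auto simp: hstrip_def)
  also have "\<dots> = integral {0..1} (\<lambda>b. integral {0..1} (\<lambda>a. f (vector [of_real a, of_real b + \<i> * of_real w2])))"
    using integral_swap_continuous[of 0 0 1 1 "\<lambda>a b. f (vector [of_real a, of_real b + \<i> * of_real w2])"]
      cont_lines[of 0 w2 "cbox (0, 0) (1, 1)"] r0 w2
    by (simp add: cbox_interval split_beta)
  also have "\<dots> = integral {0..1} (\<lambda>b. integral {0..1}
      (\<lambda>a. f (vector [of_real a + \<i> * of_real w1, of_real b + \<i> * of_real w2])))"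
    using w2 by (intro integral_cong integral_periodic_holomorphic_shift[OF hol1 per1 w1])
      (auto simp: hstrip_def)
  finally show ?thesis .
qed

lemma l1r_nonneg: "l1r x \<ge> 0"
  unfolding l1r_def by simp

lemma l1r_add_le: "l1r (x + y) \<le> l1r x + l1r y"
  unfolding l1r_def by simp

lemma l1r_diff_le: "l1r (x - y) \<le> l1r x + l1r y"
  unfolding l1r_def by simp

lemma l1r_diff_ge: "l1r (x - y) \<ge> l1r x - l1r y"
  unfolding l1r_def by simp

lemma l1r_scaleR: "l1r (c *\<^sub>R x) = \<bar>c\<bar> * l1r x"
  unfolding l1r_def by (simp add: abs_mult algebra_simps)

lemma l1r_mult_le: "l1r (B *v y) \<le> (\<bar>B$1$1\<bar> + \<bar>B$1$2\<bar> + \<bar>B$2$1\<bar> + \<bar>B$2$2\<bar>) * l1r y"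
proof -
  have "\<bar>(B *v y)$i\<bar> \<le> \<bar>B$i$1\<bar> * \<bar>y$1\<bar> + \<bar>B$i$2\<bar> * \<bar>y$2\<bar>" for i
    by (simp add: matrix_vector_mult_def sum_2) (metis abs_mult abs_triangle_ineq)
  then have "l1r (B *v y) \<le> \<bar>B$1$1\<bar> * \<bar>y$1\<bar> + \<bar>B$1$2\<bar> * \<bar>y$2\<bar> + (\<bar>B$2$1\<bar> * \<bar>y$1\<bar> + \<bar>B$2$2\<bar> * \<bar>y$2\<bar>)"
    unfolding l1r_def by (meson add_mono)
  also have "\<dots> \<le> (\<bar>B$1$1\<bar> + \<bar>B$1$2\<bar> + \<bar>B$2$1\<bar> + \<bar>B$2$2\<bar>) * l1r y"
    unfolding l1r_def by (simp add: algebra_simps mult_left_mono)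
  finally show ?thesis .
qed

lemma l1r_mult_diff_le:
  "l1r (B *v y - m) \<le> (\<bar>B$1$1\<bar> + \<bar>B$1$2\<bar> + \<bar>B$2$1\<bar> + \<bar>B$2$2\<bar>) * l1r y + l1r m"
  by (rule order.trans[OF l1r_diff_le add_right_mono[OF l1r_mult_le]])

text \<open>\<open>A\<close> stands for \<open>M\<^sup>T\<close>, whose eigenvalues are \<open>l\<close> and \<open>l\<^sup>-\<^sup>1\<close>; \<open>char_eq\<close> is Cayley--Hamilton.\<close>
locale hyperbolic_matrix =
  fixes A :: "real^2^2" and l :: real
  assumes det_A: "det A = 1"
    and abs_l_gt_1: "\<bar>l\<bar> > 1"
    and char_eq: "\<And>y. A *v (A *v y) = (l + inverse l) *\<^sub>R (A *v y) - y"
begin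

text \<open>Since \<open>(A - l)(A - l\<^sup>-\<^sup>1) = 0\<close>, the map \<open>A - l\<^sup>-\<^sup>1\<close> lands in the \<open>l\<close>-eigenspace and
  \<open>l - A\<close> in the \<open>l\<^sup>-\<^sup>1\<close>-eigenspace; rescaling makes them complementary projections.\<close>
definition uproj :: "real^2 \<Rightarrow> real^2" where
  "uproj y = inverse (l - inverse l) *\<^sub>R (A *v y - inverse l *\<^sub>R y)"

definition sproj :: "real^2 \<Rightarrow> real^2" where
  "sproj y = inverse (l - inverse l) *\<^sub>R (l *\<^sub>R y - A *v y)"

definition split_norm :: "real^2 \<Rightarrow> real" where
  "split_norm y = l1r (uproj y) - l1r (sproj y)"

lemma abs_inverse_l_lt_1: "\<bar>inverse l\<bar> < 1"
  using abs_l_gt_1 by (simp add: abs_inverse inverse_less_1_iff)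

lemma l_minus_inverse_l_nonzero: "l - inverse l \<noteq> 0"
  using abs_l_gt_1 abs_inverse_l_lt_1 by (smt (verit))

lemma uproj_add_sproj: "uproj y + sproj y = y"
proof -
  have "uproj y + sproj y = (inverse (l - inverse l) * (l - inverse l)) *\<^sub>R y"
    by (simp add: uproj_def sproj_def algebra_simps)
  then show ?thesis
    using l_minus_inverse_l_nonzero by simp
qed

lemma A_uproj: "A *v uproj y = l *\<^sub>R uproj y"
proof -
  have "A *v uproj y = inverse (l - inverse l) *\<^sub>R (A *v (A *v y) - inverse l *\<^sub>R (A *v y))"
    by (simp add: uproj_def algebra_simps)
  also have "\<dots> = inverse (l - inverse l) *\<^sub>R (l *\<^sub>R (A *v y) - y)"
    by (simp add: char_eq algebra_simps)
  also have "\<dots> = l *\<^sub>R uproj y"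
    using abs_l_gt_1 by (simp add: uproj_def algebra_simps)
  finally show ?thesis .
qed

lemma A_sproj: "A *v sproj y = inverse l *\<^sub>R sproj y"
proof -
  have "A *v sproj y = inverse (l - inverse l) *\<^sub>R (l *\<^sub>R (A *v y) - A *v (A *v y))"
    by (simp add: sproj_def algebra_simps)
  also have "\<dots> = inverse (l - inverse l) *\<^sub>R (y - inverse l *\<^sub>R (A *v y))"
    by (simp add: char_eq algebra_simps)
  also have "\<dots> = inverse l *\<^sub>R sproj y"
    using abs_l_gt_1 by (simp add: sproj_def algebra_simps)
  finally show ?thesis .
qed

lemma uproj_mult_diff: "uproj (A *v y - m) = l *\<^sub>R uproj y - uproj m"
  using A_uproj[of y] by (simp add: uproj_def algebra_simps)

lemma sproj_mult_diff: "sproj (A *v y - m) = inverse l *\<^sub>R sproj y - sproj m"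
  using A_sproj[of y] by (simp add: sproj_def algebra_simps)

lemma eigenvalue_gt_1_unique:
  assumes "\<bar>l'\<bar> > 1" "v \<noteq> 0" "A *v v = l' *\<^sub>R v"
  shows "l' = l"
proof -
  have "A *v (A *v v) = (l' * l') *\<^sub>R v"
    using assms(3) by (simp add: algebra_simps)
  moreover have "A *v (A *v v) = ((l + inverse l) * l' - 1) *\<^sub>R v"
    using assms(3) char_eq[of v] by (simp add: algebra_simps)
  ultimately have "(l' * l' - ((l + inverse l) * l' - 1)) *\<^sub>R v = 0"
    by (simp add: algebra_simps)
  then have "l' * l' - ((l + inverse l) * l' - 1) = 0"
    using assms(2) by simp
  moreover have "l * inverse l = 1"
    using abs_l_gt_1 by auto
  ultimately have "(l' - l) * (l' - inverse l) = 0"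
    by (simp add: algebra_simps)
  then show ?thesis
    using assms(1) abs_inverse_l_lt_1 by auto
qed

lemma unstable_eigenvector_exists: "\<exists>v. v \<noteq> 0 \<and> A *v v = l *\<^sub>R v"
proof (rule ccontr)
  assume "\<not> ?thesis"
  then have "uproj y = 0" for y
    using A_uproj by blast
  then have A_scalar: "A *v y = inverse l *\<^sub>R y" for y
    using A_sproj[of y] uproj_add_sproj[of y] by simp
  have "A *v vector [1, 0] = vector [A$1$1, A$2$1]" "A *v vector [0, 1] = vector [A$1$2, A$2$2]"
    by (simp_all add: vec_eq_iff forall_2 matrix_vector_mult_def sum_2)
  then have "A$1$1 = inverse l" "A$2$1 = 0" "A$1$2 = 0" "A$2$2 = inverse l"
    using A_scalar[of "vector [1, 0]"] A_scalar[of "vector [0, 1]"] by (simp_all add: vec_eq_iff forall_2)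
  then have "inverse l * inverse l = 1"
    using det_A unfolding det_2 by simp
  then have "\<bar>inverse l\<bar> * \<bar>inverse l\<bar> = 1"
    by (metis abs_mult abs_one)
  moreover have "\<bar>inverse l\<bar> * \<bar>inverse l\<bar> < 1 * 1"
    using abs_inverse_l_lt_1 by (intro mult_strict_mono') auto
  ultimately show False by simp
qed

lemma eigen_decomposition_unique:
  assumes "A *v u = l *\<^sub>R u" and "A *v (y - u) = inverse l *\<^sub>R (y - u)"
  shows "u = uproj y"
proof -
  define d where "d = u - uproj y"
  have d_sproj: "d = sproj y - (y - u)"
    using uproj_add_sproj[of y] by (simp add: d_def algebra_simps)
  have "A *v d = l *\<^sub>R d"
    using assms(1) A_uproj[of y] by (simp add: d_def matrix_vector_mult_diff_distrib algebra_simps)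
  moreover have "A *v d = inverse l *\<^sub>R d"
    using assms(2) A_sproj[of y]
    by (simp add: d_sproj matrix_vector_mult_diff_distrib scaleR_diff_right)
  ultimately have "(l - inverse l) *\<^sub>R d = 0"
    by (metis diff_self scaleR_diff_left)
  then have "d = 0"
    using l_minus_inverse_l_nonzero by auto
  then show ?thesis
    by (simp add: d_def)
qed

lemma projections_bounded: "\<exists>K>0. \<forall>m. l1r (uproj m) + l1r (sproj m) \<le> K * l1r m"
proof -
  define a where "a = \<bar>A$1$1\<bar> + \<bar>A$1$2\<bar> + \<bar>A$2$1\<bar> + \<bar>A$2$2\<bar>"
  define c where "c = \<bar>inverse (l - inverse l)\<bar>"
  have Am: "l1r (A *v m) \<le> a * l1r m" for m
    unfolding a_def by (rule l1r_mult_le)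
  have u_le: "l1r (uproj m) \<le> c * (a * l1r m + \<bar>inverse l\<bar> * l1r m)"
    and s_le: "l1r (sproj m) \<le> c * (\<bar>l\<bar> * l1r m + a * l1r m)" for m
    unfolding uproj_def sproj_def l1r_scaleR c_def
    by (intro mult_left_mono order.trans[OF l1r_diff_le] add_mono Am; simp add: l1r_scaleR)+
  have "l1r (uproj m) + l1r (sproj m) \<le> (c * (2 * a + \<bar>l\<bar> + \<bar>inverse l\<bar>)) * l1r m" for m
    using add_mono[OF u_le[of m] s_le[of m]] by (simp add: algebra_simps)
  also have "\<dots> m \<le> (c * (2 * a + \<bar>l\<bar> + \<bar>inverse l\<bar>) + 1) * l1r m" for m
    by (intro mult_right_mono l1r_nonneg) simp
  finally have "l1r (uproj m) + l1r (sproj m) \<le> (c * (2 * a + \<bar>l\<bar> + \<bar>inverse l\<bar>) + 1) * l1r m" for m .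
  moreover have "c * (2 * a + \<bar>l\<bar> + \<bar>inverse l\<bar>) + 1 > 0"
    unfolding a_def c_def by (intro add_nonneg_pos mult_nonneg_nonneg add_nonneg_nonneg) auto
  ultimately show ?thesis by blast
qed

lemma split_norm_expansion:
  "\<exists>\<kappa>>0. \<exists>K>0. \<forall>y m. split_norm (A *v y - m) - split_norm y \<ge> \<kappa> * l1r y - K * l1r m"
proof -
  obtain K where K: "K > 0" "\<And>m. l1r (uproj m) + l1r (sproj m) \<le> K * l1r m"
    using projections_bounded by blast
  define \<kappa> where "\<kappa> = min (\<bar>l\<bar> - 1) (1 - \<bar>inverse l\<bar>)"
  have \<kappa>: "\<kappa> > 0"
    unfolding \<kappa>_def using abs_l_gt_1 abs_inverse_l_lt_1 by simp
  have "split_norm (A *v y - m) - split_norm y \<ge> \<kappa> * l1r y - K * l1r m" for y m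
  proof -
    have "l1r (uproj (A *v y - m)) \<ge> \<bar>l\<bar> * l1r (uproj y) - l1r (uproj m)"
      using l1r_diff_ge[of "l *\<^sub>R uproj y" "uproj m"] by (simp add: uproj_mult_diff l1r_scaleR)
    moreover have "l1r (sproj (A *v y - m)) \<le> \<bar>inverse l\<bar> * l1r (sproj y) + l1r (sproj m)"
      using l1r_diff_le[of "inverse l *\<^sub>R sproj y" "sproj m"] by (simp add: sproj_mult_diff l1r_scaleR)
    moreover have "\<kappa> * l1r y \<le> \<kappa> * l1r (uproj y) + \<kappa> * l1r (sproj y)"
      using l1r_add_le[of "uproj y" "sproj y"] uproj_add_sproj[of y] \<kappa>
      by (simp add: distrib_left[symmetric])
    moreover have "\<kappa> * l1r (uproj y) \<le> (\<bar>l\<bar> - 1) * l1r (uproj y)"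
      "\<kappa> * l1r (sproj y) \<le> (1 - \<bar>inverse l\<bar>) * l1r (sproj y)"
      unfolding \<kappa>_def by (intro mult_right_mono l1r_nonneg; simp)+
    ultimately show ?thesis
      using K(2)[of m] by (simp add: split_norm_def algebra_simps)
  qed
  then show ?thesis
    using \<kappa> K(1) by blast
qed

end

lemma char_eq_transpose:
  fixes M :: "real^2^2"
  assumes "det M = 1"
  shows "transpose M *v (transpose M *v y) = (M$1$1 + M$2$2) *\<^sub>R (transpose M *v y) - y"
  using assms unfolding det_2
  by (simp add: vec_eq_iff forall_2 matrix_vector_mult_def sum_2 transpose_def algebra_simps)

lemma hyperbolic_abs_trace_gt_2:
  fixes M :: "real^2^2"
  assumes det: "det M = 1" and hyp: "hyperbolic M"
  shows "\<bar>M$1$1 + M$2$2\<bar> > 2"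
proof (rule ccontr)
  define a where "a = (M$1$1 + M$2$2) / 2"
  assume "\<not> \<bar>M$1$1 + M$2$2\<bar> > 2"
  then have "\<bar>a\<bar> \<le> 1"
    unfolding a_def by simp
  then have a1: "a^2 \<le> 1"
    by (metis abs_ge_zero power2_abs power_le_one)
  define \<sigma> where "\<sigma> = sqrt (1 - a^2)"
  have \<sigma>: "\<sigma>^2 = 1 - a^2"
    unfolding \<sigma>_def using a1 by simp
  text \<open>\<open>a \<pm> i\<sigma>\<close> lies on the unit circle and solves \<open>\<lambda>\<^sup>2 - 2a\<lambda> + 1 = 0\<close>.\<close>
  define e where "e = complex_of_real a + \<i> * complex_of_real \<sigma>"
  have "cmod e = 1"
    unfolding e_def cmod_def using \<sigma> by simp
  moreover have "is_eigenvalue_c M e"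
  proof -
    have dM: "of_real (M$1$1) * of_real (M$2$2) - of_real (M$1$2) * of_real (M$2$1) = (1::complex)"
      using arg_cong[OF det[unfolded det_2], of complex_of_real] by simp
    have "det (mat e - (\<chi> i j. complex_of_real (M$i$j))) =
      (e - of_real (M$1$1)) * (e - of_real (M$2$2)) - of_real (M$1$2) * of_real (M$2$1)"
      unfolding det_2 by (simp add: mat_def)
    also have "\<dots> = (e - of_real a)^2 + of_real (1 - a^2)"
      using dM unfolding a_def by (simp add: algebra_simps power2_eq_square)
    also have "\<dots> = 0"
      unfolding e_def using \<sigma> by (simp add: power_mult_distrib flip: of_real_power)
    finally show ?thesis
      unfolding is_eigenvalue_c_def .
  qed
  ultimately show False
    using hyp unfolding hyperbolic_def by blast
qed

lemma hyperbolic_imp_hyperbolic_matrix: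
  fixes M :: "real^2^2"
  assumes det: "det M = 1" and hyp: "hyperbolic M"
  obtains l where "hyperbolic_matrix (transpose M) l"
proof -
  define t where "t = M$1$1 + M$2$2"
  have "\<bar>t\<bar> > 2"
    unfolding t_def by (rule hyperbolic_abs_trace_gt_2[OF det hyp])
  then have "2^2 < \<bar>t\<bar>^2"
    by (intro power_strict_mono) auto
  then have t4: "t^2 > 4"
    by simp
  define S where "S = sqrt (t^2 - 4)"
  have S: "S^2 = t^2 - 4" "S \<ge> 0"
    unfolding S_def using t4 by auto
  define l where "l = (if t > 0 then (t + S) / 2 else (t - S) / 2)"
  have l1: "\<bar>l\<bar> > 1"
    unfolding l_def using \<open>\<bar>t\<bar> > 2\<close> S(2) by auto
  have "l^2 - t * l + 1 = (S^2 - t^2) / 4 + 1"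
    unfolding l_def by (auto simp: power2_eq_square field_simps)
  then have "l^2 - t * l + 1 = 0"
    using S(1) by simp
  then have "t = l + inverse l"
    using l1 by (auto simp: field_simps power2_eq_square)
  then have "hyperbolic_matrix (transpose M) l"
    using det l1 char_eq_transpose[OF det] by unfold_locales (simp_all add: det_transpose t_def)
  then show thesis ..
qed

lemma normM_expansion:
  fixes M :: "real^2^2"
  assumes det: "det M = 1" and hyp: "hyperbolic M"
  shows "\<exists>\<kappa>>0. \<exists>K>0. \<forall>y m. normM M (transpose M *v y - m) - normM M y \<ge> \<kappa> * l1r y - K * l1r m"
proof -
  obtain l where "hyperbolic_matrix (transpose M) l"
    using hyperbolic_imp_hyperbolic_matrix[OF det hyp] .
  then interpret hyperbolic_matrix "transpose M" l .
  have lam: "lamM M = l"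
    unfolding lamM_def
    by (rule the_equality) (use abs_l_gt_1 unstable_eigenvector_exists eigenvalue_gt_1_unique in blast)+
  have sproj_eq: "y - uproj y = sproj y" for y
    using uproj_add_sproj[of y] by (metis add_diff_cancel_left')
  have "plus_part M y = uproj y" for y
    unfolding plus_part_def Eplus_def Eminus_def lam
    by (rule the_equality) (use A_uproj A_sproj eigen_decomposition_unique in \<open>auto simp: sproj_eq\<close>)
  then have "normM M y = split_norm y" for y
    by (simp add: normM_def minus_part_def sproj_eq split_norm_def)
  then show ?thesis
    using split_norm_expansion by simp
qed

lemma norm_le_l1c: "norm v \<le> l1c v"
  unfolding norm_vec_def l1c_def using L2_set_le_sum_abs[of "\<lambda>i. norm (v$i)" UNIV] by (simp add: sum_2)

lemma l1c_le_2_norm: "l1c v \<le> 2 * norm v"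
  unfolding l1c_def using Finite_Cartesian_Product.norm_nth_le[of v 1] Finite_Cartesian_Product.norm_nth_le[of v 2]
  by simp

lemma norm_nth_le_l1c: "cmod (v$i) \<le> l1c v"
  unfolding l1c_def using exhaust_2[of i] by auto

lemma opnorm1_nonneg:
  assumes "bounded_linear L"
  shows "opnorm1 L \<ge> 0"
proof -
  obtain K where K: "\<And>x. norm (L x) \<le> norm x * K"
    using bounded_linear.bounded[OF assms] by blast
  have "0 \<in> {l1c (L v) | v. l1c v \<le> 1}"
    using linear_0[OF bounded_linear.linear[OF assms]] by (intro CollectI exI[of _ 0]) (simp add: l1c_def)
  moreover have "bdd_above {l1c (L v) | v. l1c v \<le> 1}"
  proof (rule bdd_aboveI)
    fix x assume "x \<in> {l1c (L v) | v. l1c v \<le> 1}"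
    then obtain v where v: "x = l1c (L v)" "l1c v \<le> 1" by blast
    then have "norm v \<le> 1"
      using norm_le_l1c[of v] by linarith
    have "norm v * K \<le> norm v * \<bar>K\<bar>"
      by (simp add: mult_left_mono)
    also have "\<dots> \<le> \<bar>K\<bar>"
      using \<open>norm v \<le> 1\<close> by (simp add: mult_left_le_one_le)
    finally have "norm v * K \<le> \<bar>K\<bar>" .
    then show "x \<le> 2 * \<bar>K\<bar>"
      using v(1) l1c_le_2_norm[of "L v"] K[of v] by linarith
  qed
  ultimately show ?thesis
    unfolding opnorm1_def by (rule cSup_upper)
qed

lemma in_Br_has_derivative:
  assumes "in_Br r \<psi> \<Psi>" "z \<in> strip r"
  shows "(\<Psi> has_derivative frechet_derivative \<Psi> (at z)) (at z)"
proof -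
  obtain D where "(\<Psi> has_derivative D) (at z)"
    using assms unfolding in_Br_def holo2_def by blast
  then show ?thesis
    using differentiableI frechet_derivative_works by blast
qed

lemma in_Br_continuous_on: "in_Br r \<psi> \<Psi> \<Longrightarrow> continuous_on (strip r) \<Psi>"
  using in_Br_has_derivative has_derivative_continuous by (blast intro: continuous_at_imp_continuous_on)

lemma dTM_le_imp_l1c_le:
  assumes B: "in_Br r \<psi> \<Psi>" and r: "r > 0" and d: "dTM r \<Psi> \<le> ereal \<delta>" and z: "z \<in> strip r"
  shows "l1c (\<Psi> z) \<le> \<delta>"
proof -
  have z0: "0 \<in> strip r"
    using r by (simp add: strip_def)
  define X where "X = (SUP z\<in>strip r. ereal (l1c (\<Psi> z)))"
  define Y where "Y = (SUP z\<in>strip r. ereal (opnorm1 (frechet_derivative \<Psi> (at z))))"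
  have "opnorm1 (frechet_derivative \<Psi> (at 0)) \<ge> 0"
    using in_Br_has_derivative[OF B z0] by (intro opnorm1_nonneg has_derivative_bounded_linear)
  moreover have "ereal (opnorm1 (frechet_derivative \<Psi> (at 0))) \<le> Y"
    unfolding Y_def by (rule SUP_upper[OF z0])
  ultimately have "X \<le> X + Y"
    by (simp add: add_increasing2 order.trans[rotated])
  also have "\<dots> \<le> ereal \<delta>"
    using d unfolding dTM_def X_def Y_def .
  moreover have "ereal (l1c (\<Psi> z)) \<le> X"
    unfolding X_def by (rule SUP_upper[OF z])
  ultimately have "ereal (l1c (\<Psi> z)) \<le> ereal \<delta>"
    by (blast intro: order.trans)
  then show ?thesis
    by simp
qed

lemma exp_2pi_i_add_Ints:
  assumes "k \<in> \<int>"
  shows "exp (2 * of_real pi * \<i> * (X + complex_of_real k)) = exp (2 * of_real pi * \<i> * X)"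
proof -
  obtain j where j: "k = of_int j"
    using assms by (auto elim: Ints_cases)
  have "exp (2 * of_real pi * \<i> * of_int j) = 1"
    using exp_integer_2pi[of "of_int j"] by (simp add: mult.commute mult.left_commute)
  then show ?thesis
    by (simp add: j distrib_left exp_add)
qed

lemma norm_integral_unit_le:
  fixes F :: "real \<Rightarrow> 'a::banach"
  assumes "\<And>x. x \<in> {0..1} \<Longrightarrow> norm (F x) \<le> B"
  shows "norm (integral {0..1} F) \<le> B"
proof (cases "F integrable_on {0..1}")
  case True
  have "0 \<le> B"
    using assms[of 0] by (meson atLeastAtMost_iff norm_ge_zero order_trans zero_le_one order_refl)
  then have "norm (integral {0..1} F) \<le> B * content (cbox (0::real) 1)"
    by (rule has_integral_bound) (use True assms in \<open>auto simp: cbox_interval\<close>)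
  then show ?thesis by simp
next
  case False
  then show ?thesis
    using assms[of 0] by (simp add: not_integrable_integral) (meson norm_ge_zero order_trans)
qed

definition phase_ext :: "real^2 \<Rightarrow> real^2 \<Rightarrow> (complex^2 \<Rightarrow> complex^2) \<Rightarrow> complex^2 \<Rightarrow> complex" where
  "phase_ext m n \<Psi> z = exp (2 * of_real pi * \<i> *
     (of_real (m$1) * z$1 + of_real (m$2) * z$2 + of_real (n$1) * \<Psi> z $ 1 + of_real (n$2) * \<Psi> z $ 2))"

lemma Icoef_eq_integral_phase_ext:
  assumes "in_Br r \<psi> \<Psi>"
  shows "Icoef M \<psi> n1 n2 =
    integral (cbox 0 1) (\<lambda>x. phase_ext (transpose M *v ivec n2 - ivec n1) (ivec n2) \<Psi> (cvec x))"
  unfolding Icoef_def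
proof (rule integral_cong)
  fix x :: "real^2"
  define m where "m = transpose M *v ivec n2 - ivec n1"
  define n where "n = ivec n2"
  have ext: "\<Psi> (cvec x) = cvec (\<psi> x)"
    using assms unfolding in_Br_def by blast
  have cvec_nth: "cvec y $ i = of_real (y $ i)" for y i
    by (simp add: cvec_def)
  have phase: "n \<bullet> (M *v x + \<psi> x) - ivec n1 \<bullet> x = m$1 * x$1 + m$2 * x$2 + n$1 * \<psi> x $ 1 + n$2 * \<psi> x $ 2"
    unfolding m_def n_def by (simp add: inner_vec_def sum_2 matrix_vector_mult_def transpose_def algebra_simps)
  show "cis (2 * pi * (ivec n2 \<bullet> (M *v x + \<psi> x) - ivec n1 \<bullet> x)) =
      phase_ext (transpose M *v ivec n2 - ivec n1) (ivec n2) \<Psi> (cvec x)"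
    unfolding m_def[symmetric] unfolding n_def[symmetric] unfolding phase_ext_def phase ext cis_conv_exp cvec_nth
    by (simp add: algebra_simps)
qed

lemma continuous_on_phase_ext:
  assumes "continuous_on (strip r) \<Psi>"
  shows "continuous_on (strip r) (phase_ext m n \<Psi>)"
  unfolding phase_ext_def by (intro continuous_intros assms continuous_on_compose2[OF assms]) auto

lemma separately_holomorphic_phase_ext:
  assumes "holo2 \<Psi> (strip r)"
  shows "separately_holomorphic (phase_ext m n \<Psi>) r"
  unfolding separately_holomorphic_def
proof
  fix c assume c: "c \<in> hstrip r"
  have "(\<lambda>z. \<Psi> (vector [z, c]) $ j) holomorphic_on hstrip r"
    "(\<lambda>z. \<Psi> (vector [c, z]) $ j) holomorphic_on hstrip r" for j
    using holo2_imp_separately_holomorphic[OF assms, of j] c unfolding separately_holomorphic_def by blast+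
  then show "(\<lambda>z. phase_ext m n \<Psi> (vector [z, c])) holomorphic_on hstrip r \<and>
      (\<lambda>z. phase_ext m n \<Psi> (vector [c, z])) holomorphic_on hstrip r"
    unfolding phase_ext_def by (simp add: holomorphic_intros)
qed

lemma phase_ext_periodic:
  assumes B: "in_Br r \<psi> \<Psi>" and m: "\<And>i. m$i \<in> \<int>" and z: "z \<in> strip r"
  shows "phase_ext m n \<Psi> (z + cvec (ivec k)) = phase_ext m n \<Psi> z"
proof -
  define X where "X = of_real (m$1) * z$1 + of_real (m$2) * z$2 + of_real (n$1) * \<Psi> z $ 1 + of_real (n$2) * \<Psi> z $ 2"
  have int: "m$1 * of_int (k$1) + m$2 * of_int (k$2) \<in> \<int>"
    using m by (intro Ints_add Ints_mult) auto
  have "phase_ext m n \<Psi> (z + cvec (ivec k)) =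
      exp (2 * of_real pi * \<i> * (X + of_real (m$1 * of_int (k$1) + m$2 * of_int (k$2))))"
    unfolding phase_ext_def X_def in_Br_extension_periodic[OF B z]
    by (simp add: cvec_def ivec_def algebra_simps)
  also have "\<dots> = phase_ext m n \<Psi> z"
    unfolding exp_2pi_i_add_Ints[OF int] by (simp add: phase_ext_def X_def)
  finally show ?thesis .
qed

lemma norm_phase_ext_le:
  assumes Im1: "Im (z$1) = \<rho> * sgn (m$1)" and Im2: "Im (z$2) = \<rho> * sgn (m$2)"
    and \<Psi>: "l1c (\<Psi> z) \<le> \<delta>"
  shows "norm (phase_ext m n \<Psi> z) \<le> exp (- 2 * pi * \<rho> * l1r m + 2 * pi * \<delta> * l1r n)"
proof -
  define X where "X = of_real (m$1) * z$1 + of_real (m$2) * z$2 + of_real (n$1) * \<Psi> z $ 1 + of_real (n$2) * \<Psi> z $ 2"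
  have n_Im: "n$j * Im (\<Psi> z $ j) \<ge> - (\<bar>n$j\<bar> * \<delta>)" for j
  proof -
    have "\<bar>n$j * Im (\<Psi> z $ j)\<bar> \<le> \<bar>n$j\<bar> * \<delta>"
      unfolding abs_mult
      by (intro mult_left_mono order.trans[OF abs_Im_le_cmod] order.trans[OF norm_nth_le_l1c \<Psi>]) auto
    then show ?thesis by linarith
  qed
  have "m$1 * Im (z$1) = \<rho> * \<bar>m$1\<bar>" "m$2 * Im (z$2) = \<rho> * \<bar>m$2\<bar>"
    using Im1 Im2 by (simp_all add: abs_sgn algebra_simps)
  then have "Im X = \<rho> * \<bar>m$1\<bar> + \<rho> * \<bar>m$2\<bar> + n$1 * Im (\<Psi> z $ 1) + n$2 * Im (\<Psi> z $ 2)"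
    by (simp add: X_def)
  moreover have "\<rho> * l1r m - \<delta> * l1r n = \<rho> * \<bar>m$1\<bar> + \<rho> * \<bar>m$2\<bar> - \<bar>n$1\<bar> * \<delta> - \<bar>n$2\<bar> * \<delta>"
    by (simp add: l1r_def algebra_simps)
  ultimately have "\<rho> * l1r m - \<delta> * l1r n \<le> Im X"
    using n_Im[of 1] n_Im[of 2] by linarith
  then have "2 * pi * (\<rho> * l1r m - \<delta> * l1r n) \<le> 2 * pi * Im X"
    by (intro mult_left_mono) auto
  then show ?thesis
    unfolding phase_ext_def X_def[symmetric] by (simp add: algebra_simps)
qed

lemma SL2Z_mult_ivec_Ints:
  assumes "SL2Z M"
  shows "(transpose M *v ivec n2 - ivec n1) $ i \<in> \<int>"
  using assms unfolding SL2Z_def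
  by (simp add: matrix_vector_mult_def sum_2 transpose_def ivec_def)

lemma Icoef_bound:
  assumes SL: "SL2Z M" and B: "in_Br r \<psi> \<Psi>" and r: "r > 0" and d: "dTM r \<Psi> \<le> ereal \<delta>"
  shows "cmod (Icoef M \<psi> n1 n2) \<le>
     exp (- 2 * pi * (r / 2) * l1r (transpose M *v ivec n2 - ivec n1) + 2 * pi * \<delta> * l1r (ivec n2))"
proof -
  define m where "m = transpose M *v ivec n2 - ivec n1"
  define f where "f = phase_ext m (ivec n2) \<Psi>"
  define w1 where "w1 = r / 2 * sgn (m$1)"
  define w2 where "w2 = r / 2 * sgn (m$2)"
  have w: "\<bar>w1\<bar> < r" "\<bar>w2\<bar> < r"
    unfolding w1_def w2_def using r by (auto simp: abs_mult sgn_if)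
  have H: "holo2 \<Psi> (strip r)"
    using B unfolding in_Br_def by blast
  have "Icoef M \<psi> n1 n2 = integral {0..1} (\<lambda>b. integral {0..1}
      (\<lambda>a. f (vector [of_real a + \<i> * of_real w1, of_real b + \<i> * of_real w2])))"
    unfolding Icoef_eq_integral_phase_ext[OF B] m_def[symmetric] f_def
  proof (rule integral_torus_shift_Im[OF _ _ _ w])
    show "continuous_on (strip r) (phase_ext m (ivec n2) \<Psi>)"
      by (rule continuous_on_phase_ext[OF in_Br_continuous_on[OF B]])
    show "separately_holomorphic (phase_ext m (ivec n2) \<Psi>) r"
      by (rule separately_holomorphic_phase_ext[OF H])
    show "phase_ext m (ivec n2) \<Psi> (z + cvec (ivec k)) = phase_ext m (ivec n2) \<Psi> z"
      if "z \<in> strip r" for z k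
      using SL2Z_mult_ivec_Ints[OF SL] by (intro phase_ext_periodic[OF B _ that]) (simp add: m_def)
  qed
  also have "cmod \<dots> \<le> exp (- 2 * pi * (r / 2) * l1r m + 2 * pi * \<delta> * l1r (ivec n2))"
  proof (intro norm_integral_unit_le)
    fix a b :: real
    have "vector [of_real a + \<i> * of_real w1, of_real b + \<i> * of_real w2] \<in> strip r"
      using w by (simp add: vector_in_strip_iff hstrip_def)
    then show "norm (f (vector [of_real a + \<i> * of_real w1, of_real b + \<i> * of_real w2]))
        \<le> exp (- 2 * pi * (r / 2) * l1r m + 2 * pi * \<delta> * l1r (ivec n2))"
      unfolding f_def by (intro norm_phase_ext_le dTM_le_imp_l1c_le[OF B r d]) (simp_all add: w1_def w2_def)
  qed
  finally show ?thesis
    unfolding m_def .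
qed

lemma exp_weighted_le_of_exponent_le:
  fixes I :: real
  assumes I: "I \<le> exp (- 2 * pi * \<rho> * lm + 2 * pi * \<delta> * ly)"
    and e: "- c1 * N - \<rho> * lm + \<delta> * ly \<le> - c2 * L"
  shows "exp (- 2 * pi * c1 * N) * I \<le> exp (- 2 * pi * c2 * L)"
proof -
  have "exp (- 2 * pi * c1 * N) * I \<le> exp (- 2 * pi * c1 * N) * exp (- 2 * pi * \<rho> * lm + 2 * pi * \<delta> * ly)"
    using I by simp
  also have "\<dots> = exp (2 * pi * (- c1 * N - \<rho> * lm + \<delta> * ly))"
    by (simp add: exp_add[symmetric] algebra_simps)
  also have "\<dots> \<le> exp (2 * pi * (- c2 * L))"
    using mult_left_mono[OF e, of "2 * pi"] by simp
  finally show ?thesis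
    by (simp add: algebra_simps)
qed

lemma exponential_decay_constants:
  fixes \<kappa> K \<rho> a :: real
  assumes \<kappa>: "\<kappa> > 0" and K: "K > 0" and \<rho>: "\<rho> > 0" and a: "a \<ge> 0"
  shows "\<exists>\<delta>>0. \<exists>c1 c2. 0 < c2 \<and> c2 < c1 \<and> (\<forall>N I lm ly ln1. 0 \<le> ly \<longrightarrow> 0 \<le> lm \<longrightarrow>
    \<kappa> * ly - K * lm \<le> N \<longrightarrow> ln1 \<le> a * ly + lm \<longrightarrow> I \<le> exp (- 2 * pi * \<rho> * lm + 2 * pi * \<delta> * ly) \<longrightarrow>
    exp (- 2 * pi * c1 * N) * I \<le> exp (- 2 * pi * c2 * (ln1 + ly)))"
proof -
  define c1 where "c1 = \<rho> / (2 * K)"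
  define \<delta> where "\<delta> = c1 * \<kappa> / 3"
  define c2 where "c2 = min (c1 / 2) (min (\<rho> / 2) (\<delta> / (a + 1)))"
  have c1: "c1 > 0" "c1 * K = \<rho> / 2"
    unfolding c1_def using \<rho> K by auto
  have \<delta>: "\<delta> > 0"
    unfolding \<delta>_def using c1 \<kappa> by simp
  have c2: "0 < c2" "c2 < c1" "c2 \<le> \<delta> / (a + 1)" "c2 \<le> \<rho> / 2"
    unfolding c2_def using c1 \<delta> \<rho> a by auto
  have exponent_le: "- c1 * N - \<rho> * lm + \<delta> * ly \<le> - c2 * (ln1 + ly)"
    if ly: "0 \<le> ly" and lm: "0 \<le> lm" and N: "\<kappa> * ly - K * lm \<le> N" and ln1: "ln1 \<le> a * ly + lm"
    for N lm ly ln1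
  proof -
    have "c1 * (\<kappa> * ly) - (c1 * K) * lm \<le> c1 * N"
      using mult_left_mono[OF N less_imp_le[OF c1(1)]] by (simp add: right_diff_distrib mult.assoc)
    then have "c1 * (\<kappa> * ly) - (\<rho> / 2) * lm \<le> c1 * N"
      unfolding c1(2) .
    moreover have "c2 * (ln1 + ly) \<le> c2 * (a + 1) * ly + c2 * lm"
      using mult_left_mono[OF ln1 less_imp_le[OF c2(1)]] by (simp add: algebra_simps)
    moreover have "c2 * (a + 1) * ly \<le> \<delta> * ly"
      using c2(3) a ly by (intro mult_right_mono) (simp_all add: le_divide_eq)
    moreover have "c2 * lm \<le> \<rho> / 2 * lm"
      using c2(4) lm by (rule mult_right_mono)
    moreover have "\<delta> * ly * 3 = c1 * (\<kappa> * ly)" "0 \<le> c1 * (\<kappa> * ly)"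
      unfolding \<delta>_def using c1(1) \<kappa> ly by simp_all
    ultimately show ?thesis
      by linarith
  qed
  have "exp (- 2 * pi * c1 * N) * I \<le> exp (- 2 * pi * c2 * (ln1 + ly))"
    if "0 \<le> ly" "0 \<le> lm" "\<kappa> * ly - K * lm \<le> N" "ln1 \<le> a * ly + lm"
      and "I \<le> exp (- 2 * pi * \<rho> * lm + 2 * pi * \<delta> * ly)" for N I lm ly ln1
    using that by (intro exp_weighted_le_of_exponent_le[OF _ exponent_le])
  then show ?thesis
    using \<delta> c2(1,2) by blast
qed

theorem proposition3p4:
  fixes M :: "real^2^2" and r :: real
  assumes "SL2Z M" and "hyperbolic M" and "r > 0"
  shows "\<exists>\<delta>>0. \<exists>c1 c2. 0 < c2 \<and> c2 < c1 \<and>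
    (\<forall>n1 n2 :: int^2. \<forall>\<psi> \<Psi>. in_Br r \<psi> \<Psi> \<longrightarrow> dTM r \<Psi> \<le> ereal \<delta> \<longrightarrow>
       exp (- 2 * pi * c1 * (normM M (ivec n1) - normM M (ivec n2))) * cmod (Icoef M \<psi> n1 n2)
         \<le> exp (- 2 * pi * c2 * (l1r (ivec n1) + l1r (ivec n2))))"
proof -
  define A where "A = transpose M"
  define a where "a = \<bar>A$1$1\<bar> + \<bar>A$1$2\<bar> + \<bar>A$2$1\<bar> + \<bar>A$2$2\<bar>"
  have det: "det M = 1"
    using assms(1) unfolding SL2Z_def by blast
  obtain \<kappa> K where "\<kappa> > 0" "K > 0"
    and expansion: "\<And>y m. normM M (A *v y - m) - normM M y \<ge> \<kappa> * l1r y - K * l1r m"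
    using normM_expansion[OF det assms(2)] unfolding A_def by blast
  then obtain \<delta> c1 c2 where "\<delta> > 0" "0 < c2" "c2 < c1" and decay:
    "\<And>N I lm ly ln1. 0 \<le> ly \<Longrightarrow> 0 \<le> lm \<Longrightarrow> \<kappa> * ly - K * lm \<le> N \<Longrightarrow> ln1 \<le> a * ly + lm \<Longrightarrow>
      I \<le> exp (- 2 * pi * (r / 2) * lm + 2 * pi * \<delta> * ly) \<Longrightarrow>
      exp (- 2 * pi * c1 * N) * I \<le> exp (- 2 * pi * c2 * (ln1 + ly))"
    using exponential_decay_constants[of \<kappa> K "r / 2" a] assms(3) by (auto simp: a_def)
  have "exp (- 2 * pi * c1 * (normM M (ivec n1) - normM M (ivec n2))) * cmod (Icoef M \<psi> n1 n2)
      \<le> exp (- 2 * pi * c2 * (l1r (ivec n1) + l1r (ivec n2)))"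
    if B: "in_Br r \<psi> \<Psi>" and d: "dTM r \<Psi> \<le> ereal \<delta>" for n1 n2 :: "int^2" and \<psi> \<Psi>
  proof -
    define m where "m = A *v ivec n2 - ivec n1"
    have n1: "ivec n1 = A *v ivec n2 - m"
      unfolding m_def by simp
    have "\<kappa> * l1r (ivec n2) - K * l1r m \<le> normM M (ivec n1) - normM M (ivec n2)"
      unfolding n1 by (rule expansion)
    moreover have "l1r (ivec n1) \<le> a * l1r (ivec n2) + l1r m"
      unfolding n1 a_def by (rule l1r_mult_diff_le)
    ultimately show ?thesis
      using Icoef_bound[OF assms(1) B assms(3) d, of n1 n2] unfolding A_def[symmetric] m_def[symmetric]
      by (intro decay[OF l1r_nonneg l1r_nonneg])
  qed
  then show ?thesis
    using \<open>\<delta> > 0\<close> \<open>0 < c2\<close> \<open>c2 < c1\<close> by blast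
qed

end
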